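(* If $\mathbf{X} \in \mathbb{R}^{m \times n}$ admits a factorization of the form \begin{equation} \mathbf{X} = \begin{bmatrix} \mathbf{u} & 0 \\ 0 & -\mathbf{u} \end{bmatrix} \begin{bmatrix} 0 & \mathbf{v}^{T} \\ \mathbf{v}^{T} & 0 \end{bmatrix} \end{equation} for some $\mathbf{v} \in \mathbb{R}^{n-1}$ and $\mathbf{u} \in \mathbb{R}^{m-1}$, then $\mathbf{X} \in \mathcal{N}(\mathscr{S}, 2)$.
   Context: Let $\mathscr{S} \colon \mathbb{R}^{m \times n} \to \mathbb{R}^{m+n-1}$ be the lifted linear convolution map, i.e. the linear operator with $(\mathscr{S}(\mathbf{W}))_k = \langle \mathbf{W}, \mathbf{S}_k \rangle$ for $1 \le k \le m+n-1$, where $(\mathbf{S}_k)_{ij} = 1$ if $i + j = k+1$ and $0$ otherwise ($1 \le i \le m$, $1 \le j \le n$); thus $\mathscr{S}$ sums the entries of its argument along anti-diagonals and satisfies $\mathscr{S}(\mathbf{x}\mathbf{y}^{T}) = \mathbf{x} \star \mathbf{y}$ (linear convolution). For a linear operator $\mathscr{S}$, $\mathcal{N}(\mathscr{S}, k) = \{\mathbf{X} \in \mathbb{R}^{m \times n} : \mathrm{rank}(\mathbf{X}) \le k,\ \mathscr{S}(\mathbf{X}) = \mathbf{0}\}$ denotes the rank $k$ null space. In the factorization, the left factor is $m \times 2$ with columns $(\mathbf{u}; 0)$ and $(0; -\mathbf{u})$, and the right factor is $2 \times n$ with rows $(0, \mathbf{v}^{T})$ and $(\mathbf{v}^{T}, 0)$.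 *)

theory Defs
  imports "Jordan_Normal_Form.DL_Rank"
begin

(* All indices are 0-based (JNF convention). Paper's 1-based (i,j,k) with
   i + j = k + 1 becomes 0-based i + j = k. *)

definition frob_inner :: "real mat \<Rightarrow> real mat \<Rightarrow> real" where
  "frob_inner W V = (\<Sum>i<dim_row W. \<Sum>j<dim_col W. W $$ (i,j) * V $$ (i,j))"

definition S_mat :: "nat \<Rightarrow> nat \<Rightarrow> nat \<Rightarrow> real mat" where
  "S_mat m n k = mat m n (\<lambda>(i,j). if i + j = k then 1 else 0)"

definition lifted_conv :: "nat \<Rightarrow> nat \<Rightarrow> real mat \<Rightarrow> real vec" where
  "lifted_conv m n W = vec (m + n - 1) (\<lambda>k. frob_inner W (S_mat m n k))"

definition rank_null_space :: "nat \<Rightarrow> nat \<Rightarrow> nat \<Rightarrow> real mat set" where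
  "rank_null_space m n k =
     {X \<in> carrier_mat m n. vec_space.rank m X \<le> k \<and> lifted_conv m n X = 0\<^sub>v (m + n - 1)}"

(* left factor: m x 2 with columns (u;0) and (0;-u), u of length m-1 *)
definition left_factor :: "nat \<Rightarrow> real vec \<Rightarrow> real mat" where
  "left_factor m u = mat m 2 (\<lambda>(i,j).
      if j = 0 then (if i < m - 1 then u $ i else 0)
      else (if i = 0 then 0 else - (u $ (i - 1))))"

(* right factor: 2 x n with rows (0, v^T) and (v^T, 0), v of length n-1 *)
definition right_factor :: "nat \<Rightarrow> real vec \<Rightarrow> real mat" where
  "right_factor n v = mat 2 n (\<lambda>(i,j).
      if i = 0 then (if j = 0 then 0 else v $ (j - 1))
      else (if j < n - 1 then v $ j else 0))"

end

theory Submission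
  imports Defs
begin

text \<open>Writing \<open>T\<close> for the rank-one matrix \<open>(u;0)(0;v)\<^sup>T\<close>, the product is \<open>T\<close> plus the
  rank-one matrix \<open>(0;-u)(v;0)\<^sup>T\<close>, whose \<open>(i,j)\<close> entry is \<open>-T(i-1,j+1)\<close>. Along every
  anti-diagonal the entries of the product are therefore consecutive differences of the
  entries of \<open>T\<close> on that anti-diagonal, so each anti-diagonal sum telescopes to an entry of the
  last row of \<open>T\<close>, which is zero.\<close>

lemma rank_sum_of_outer_products_le:
  fixes f g :: "nat \<Rightarrow> nat \<Rightarrow> 'a :: field"
  shows "vec_space.rank m (mat m n (\<lambda>(i,j). \<Sum>l<k. f i l * g l j)) \<le> k"
proof (induction k)
  case 0
  have "mat m n (\<lambda>(i,j). \<Sum>l<0. f i l * g l j) = 0\<^sub>m m n"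
    by (rule eq_matI) auto
  then show ?case by (metis vec_space.rank_0I order_refl)
next
  case (Suc k)
  have split: "mat m n (\<lambda>(i,j). \<Sum>l<Suc k. f i l * g l j)
      = mat m n (\<lambda>(i,j). \<Sum>l<k. f i l * g l j) + mat m n (\<lambda>(i,j). f i k * g k j)"
    by (rule eq_matI) auto
  have rank_one: "vec_space.rank m (mat m n (\<lambda>(i,j). f i k * g k j)) \<le> 1"
    by (rule vec_space.rank_le_1_product_entries[of _ m n "\<lambda>i. f i k" "\<lambda>j. g k j"]) auto
  have "vec_space.rank m (mat m n (\<lambda>(i,j). \<Sum>l<Suc k. f i l * g l j))
      \<le> vec_space.rank m (mat m n (\<lambda>(i,j). \<Sum>l<k. f i l * g l j))
        + vec_space.rank m (mat m n (\<lambda>(i,j). f i k * g k j))"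
    unfolding split by (rule vec_space.rank_subadditive) auto
  with Suc.IH rank_one show ?case by linarith
qed

lemma rank_mult_le_inner_dim:
  fixes A B :: "'a :: field mat"
  assumes "A \<in> carrier_mat m k" and "B \<in> carrier_mat k n"
  shows "vec_space.rank m (A * B) \<le> k"
proof -
  have "A * B = mat m n (\<lambda>(i,j). \<Sum>l<k. A $$ (i,l) * B $$ (l,j))"
    using assms by (intro eq_matI) (auto simp: scalar_prod_def lessThan_atLeast0)
  then show ?thesis by (simp add: rank_sum_of_outer_products_le)
qed

lemma frob_inner_S_mat:
  assumes "W \<in> carrier_mat m n"
  shows "frob_inner W (S_mat m n k) = (\<Sum>i<m. \<Sum>j<n. if i + j = k then W $$ (i,j) else 0)"
  using assms unfolding frob_inner_def S_mat_def by (auto intro!: sum.cong)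

lemma sum_consecutive_differences:
  fixes h :: "nat \<Rightarrow> 'a :: ab_group_add"
  shows "(\<Sum>i<N. h i - (if i = 0 then 0 else h (i - 1))) = (if N = 0 then 0 else h (N - 1))"
  by (induction N) auto

lemma lifted_conv_shift_difference_eq_0:
  fixes X :: "real mat" and F :: "nat \<Rightarrow> nat \<Rightarrow> real"
  assumes X: "X \<in> carrier_mat m n"
    and entries: "\<And>i j. i < m \<Longrightarrow> j < n \<Longrightarrow>
      X $$ (i,j) = F i j - (if i = 0 then 0 else F (i - 1) (j + 1))"
    and support: "\<And>i j. m - 1 \<le> i \<or> j = 0 \<or> n \<le> j \<Longrightarrow> F i j = 0"
  shows "lifted_conv m n X = 0\<^sub>v (m + n - 1)"
proof (rule eq_vecI)
  fix k
  define h where "h i = (if i \<le> k then F i (k - i) else 0)" for i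
  have row_sum: "(\<Sum>j<n. if i + j = k then X $$ (i,j) else 0) = h i - (if i = 0 then 0 else h (i - 1))"
    if "i < m" for i
  proof (cases "i \<le> k \<and> k - i < n")
    case True
    have "(\<Sum>j<n. if i + j = k then X $$ (i,j) else 0) = (\<Sum>j<n. if j = k - i then X $$ (i,j) else 0)"
      by (rule sum.cong) (use True in auto)
    also have "\<dots> = X $$ (i, k - i)"
      using True by simp
    finally show ?thesis
      using True that by (auto simp: entries h_def Suc_diff_le)
  next
    case False
    have "(\<Sum>j<n. if i + j = k then X $$ (i,j) else 0) = 0"
      by (intro sum.neutral) (use False in auto)
    moreover have "h i = 0"
      using False support[of i "k - i"] by (auto simp: h_def)
    moreover have "h (i - 1) = 0" if "i \<noteq> 0"
    proof -
      have "k - (i - 1) = 0 \<or> n \<le> k - (i - 1)"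
        using False that by linarith
      then show ?thesis
        using support[of "i - 1" "k - (i - 1)"] by (auto simp: h_def)
    qed
    ultimately show ?thesis by simp
  qed
  have "h (m - 1) = 0"
    using support[of "m - 1"] by (simp add: h_def)
  then have "frob_inner X (S_mat m n k) = 0"
    by (simp add: frob_inner_S_mat[OF X] row_sum sum_consecutive_differences)
  then show "lifted_conv m n X $ k = 0\<^sub>v (m + n - 1) $ k" if "k < dim_vec (0\<^sub>v (m + n - 1))"
    using that by (simp add: lifted_conv_def)
qed (simp add: lifted_conv_def)

lemma left_factor_carrier [simp]: "left_factor m u \<in> carrier_mat m 2"
  by (simp add: left_factor_def)

lemma right_factor_carrier [simp]: "right_factor n v \<in> carrier_mat 2 n"
  by (simp add: right_factor_def)

definition outer_u_shifted_v :: "nat \<Rightarrow> nat \<Rightarrow> real vec \<Rightarrow> real vec \<Rightarrow> nat \<Rightarrow> nat \<Rightarrow> real" where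
  "outer_u_shifted_v m n u v i j = (if i < m - 1 \<and> 0 < j \<and> j < n then u $ i * v $ (j - 1) else 0)"

lemma factor_product_entry:
  assumes "i < m" and "j < n"
  shows "(left_factor m u * right_factor n v) $$ (i,j)
     = outer_u_shifted_v m n u v i j
       - (if i = 0 then 0 else outer_u_shifted_v m n u v (i - 1) (j + 1))"
  using assms
  by (auto simp: left_factor_def right_factor_def outer_u_shifted_v_def scalar_prod_def
      numeral_2_eq_2 lessThan_Suc)

theorem proposition2:
  fixes m n :: nat and X :: "real mat" and u v :: "real vec"
  assumes "m \<ge> 1" and "n \<ge> 1"
    and "u \<in> carrier_vec (m - 1)" and "v \<in> carrier_vec (n - 1)"
    and "X = left_factor m u * right_factor n v"
  shows "X \<in> rank_null_space m n 2"
proof -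
  have X: "X \<in> carrier_mat m n"
    using assms(5) by (auto intro: mult_carrier_mat[of _ m 2])
  have "vec_space.rank m X \<le> 2"
    unfolding assms(5) by (rule rank_mult_le_inner_dim[of _ m 2 _ n]) simp_all
  moreover have "lifted_conv m n X = 0\<^sub>v (m + n - 1)"
    by (rule lifted_conv_shift_difference_eq_0[OF X, of "outer_u_shifted_v m n u v"])
       (auto simp: assms(5) factor_product_entry outer_u_shifted_v_def)
  ultimately show ?thesis
    using X by (simp add: rank_null_space_def)
qed

end
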